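(* Let $p,q$ be positive integers with $p/q\ge 2$. If $I$ is an independent set of the Kneser graph $K_{p/q}$, then $|N(I)|\ge \frac{p-q}{q}\,|I|$, where $N(I)$ is the set of vertices adjacent to at least one vertex of $I$.
   Context: For integers $1\le q\le p$, the Kneser graph $K_{p/q}$ has as vertices all $q$-element subsets of $[p]=\{1,\dots,p\}$, two being adjacent iff they are disjoint. *)

theory Defs
  imports Complex_Main
begin

definition kneser_vertices :: "nat \<Rightarrow> nat \<Rightarrow> nat set set" where
  "kneser_vertices p q = {A. A \<subseteq> {1..p} \<and> card A = q}"

definition kneser_adj :: "nat \<Rightarrow> nat \<Rightarrow> nat set \<Rightarrow> nat set \<Rightarrow> bool" where
  "kneser_adj p q A B \<longleftrightarrow> A \<in> kneser_vertices p q \<and> B \<in> kneser_vertices p q \<and> A \<inter> B = {}"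

definition kneser_independent :: "nat \<Rightarrow> nat \<Rightarrow> nat set set \<Rightarrow> bool" where
  "kneser_independent p q I \<longleftrightarrow> I \<subseteq> kneser_vertices p q \<and>
     (\<forall>A\<in>I. \<forall>B\<in>I. \<not> kneser_adj p q A B)"

definition kneser_nbhd :: "nat \<Rightarrow> nat \<Rightarrow> nat set set \<Rightarrow> nat set set" where
  "kneser_nbhd p q I = {B. \<exists>A\<in>I. kneser_adj p q A B}"

end

theory Submission
  imports Defs "HOL-Combinatorics.Permutations"
begin

(* Identify the ground set {1..p} with the cycle Z_p and call the q-element set
   arc p q r = {r+1, ..., r+q} (taken cyclically) the arc starting at r.
   Part 1 works on the cycle only: an intersecting family F of arcs has at most q
   members (Katona), and the arcs disjoint from some member of F number at least
   (p-q)/q * |F|; the latter combines Katona's bound with the growth of iterated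
   cyclic shifts of F.
   Part 2 transfers this to arbitrary q-sets by double counting over all pairs
   (sigma, r) of a permutation sigma of {1..p} and an arc start r: every q-set is
   mapped onto an arc by the same number c of such pairs.  For fixed sigma, the
   arcs hit by sigma`I form an intersecting family whose disjoint arcs are images
   of neighbours of I, so (p-q) * #(sigma`I-arcs) <= q * #(sigma`N(I)-arcs).
   Summing over sigma gives (p-q) * c * |I| <= q * c * |N(I)|, i.e. the theorem. *)


section \<open>Intersecting families of arcs on the cycle\<close>

text \<open>Arcs are encoded by their starting residues \<open>s, t \<in> {0..<p}\<close>; the arcs
  of length \<open>q\<close> starting at \<open>s\<close> and \<open>t\<close> are disjoint exactly when \<open>t\<close> lies
  between \<open>s + q\<close> and \<open>s + p - q\<close> modulo \<open>p\<close>.\<close>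

definition cyc_disjoint :: "nat \<Rightarrow> nat \<Rightarrow> int \<Rightarrow> int \<Rightarrow> bool" where
  "cyc_disjoint p q s t \<longleftrightarrow> int q \<le> (t - s) mod int p \<and> (t - s) mod int p \<le> int p - int q"

lemma mod_shift_inj:
  fixes s t c P :: int
  assumes "0 \<le> s" "s < P" "0 \<le> t" "t < P" "(s + c) mod P = (t + c) mod P"
  shows "s = t"
proof -
  have "s mod P = t mod P" using assms(5) by (metis add_diff_cancel_right' mod_diff_left_eq)
  thus ?thesis using assms by simp
qed

text \<open>Fixing one arc \<open>s0\<close> of the family, every other arc
  starts at offset \<open>d \<in> [0,q)\<close> or \<open>d \<in> (p-q,p)\<close> from it, and the map folding
  \<open>(p-q,p)\<close> onto \<open>[0,q)\<close> is injective on the family, since two arcs whose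
  offsets differ by exactly \<open>p - q\<close> are disjoint.\<close>

lemma katona_cyclic:
  fixes F :: "int set"
  assumes F: "F \<subseteq> {0..<int p}" and q: "1 \<le> q" "2*q \<le> p"
    and intersecting: "\<forall>s\<in>F. \<forall>t\<in>F. \<not> cyc_disjoint p q s t"
  shows "card F \<le> q"
proof (cases "F = {}")
  case False
  then obtain s0 where s0: "s0 \<in> F" by blast
  define d where "d t = (t - s0) mod int p" for t
  define fold where "fold t = (if d t < int q then d t else d t - (int p - int q))" for t
  have d_range: "0 \<le> d t" "d t < int p" for t using q unfolding d_def by auto
  have fold_range: "fold t \<in> {0..<int q}" if "t \<in> F" for t
  proof -
    have "\<not> cyc_disjoint p q s0 t" using intersecting s0 that by blast
    then show ?thesis using d_range[of t] unfolding fold_def cyc_disjoint_def d_def by auto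
  qed
  have gap: False if "t \<in> F" "t' \<in> F" "d t' = d t + (int p - int q)" for t t'
  proof -
    have "(t' - t) mod int p = (d t' - d t) mod int p" unfolding d_def by (simp add: mod_diff_eq)
    also have "\<dots> = (int p - int q) mod int p" using that(3) by (simp only: add_diff_cancel_left')
    also have "\<dots> = int p - int q" using q by (intro mod_pos_pos_trivial) auto
    finally have "cyc_disjoint p q t t'" unfolding cyc_disjoint_def using q by simp
    with intersecting that(1,2) show False by blast
  qed
  have "inj_on fold F"
  proof (rule inj_onI)
    fix t t' assume t: "t \<in> F" and t': "t' \<in> F" and eq: "fold t = fold t'"
    have "d t = d t'"
      using eq gap[OF t t'] gap[OF t' t] unfolding fold_def by (auto split: if_splits)
    moreover have "0 \<le> t" "t < int p" "0 \<le> t'" "t' < int p" using F t t' by auto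
    ultimately show "t = t'" using mod_shift_inj[of t "int p" t' "- s0"] unfolding d_def by simp
  qed
  then have "card F = card (fold ` F)" by (simp add: card_image)
  also have "\<dots> \<le> card {0..<int q}" by (rule card_mono) (use fold_range in auto)
  finally show ?thesis by simp
qed simp

lemma successor_escapes:
  fixes X :: "int set"
  assumes X: "X \<subseteq> {0..<int p}" "x0 \<in> X" "X \<noteq> {0..<int p}"
  shows "\<exists>x\<in>X. (x + 1) mod int p \<notin> X"
proof (rule ccontr)
  assume "\<not> ?thesis"
  then have closed: "\<And>x. x \<in> X \<Longrightarrow> (x + 1) mod int p \<in> X" by blast
  have p: "int p > 0" using X by auto
  have orbit: "(x0 + int k) mod int p \<in> X" for k
  proof (induction k)
    case 0 then show ?case using X p by (simp add: subset_iff)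
  next
    case (Suc k)
    have "(x0 + int (Suc k)) mod int p = ((x0 + int k) mod int p + 1) mod int p"
      by (metis add.assoc mod_add_left_eq of_nat_Suc add.commute)
    with closed[OF Suc] show ?case by simp
  qed
  have "{0..<int p} \<subseteq> X"
  proof
    fix y assume y: "y \<in> {0..<int p}"
    have "(x0 + int (nat ((y - x0) mod int p))) mod int p = (x0 + (y - x0) mod int p) mod int p"
      using p by simp
    also have "\<dots> = y" using y by (simp add: mod_add_right_eq)
    finally show "y \<in> X" using orbit by metis
  qed
  with X show False by blast
qed

text \<open>Growth of shifts: translating a nonempty \<open>F \<subseteq> Z_p\<close> by \<open>c, c+1, ..., c+k\<close>
  covers at least \<open>min p (|F| + k)\<close> residues, since each further shift adds a
  new residue until all of \<open>Z_p\<close> is covered.\<close>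

definition shifts :: "nat \<Rightarrow> int set \<Rightarrow> int \<Rightarrow> nat \<Rightarrow> int set" where
  "shifts p F c k = {t\<in>{0..<int p}. \<exists>s\<in>F. \<exists>j\<in>{0..k}. t = (s + c + int j) mod int p}"

lemma shifts_card:
  fixes F :: "int set"
  assumes F: "F \<subseteq> {0..<int p}" "F \<noteq> {}"
  shows "min p (card F + k) \<le> card (shifts p F c k)"
proof -
  have p: "int p > 0" using F by auto
  have fin: "finite (shifts p F c k)" for k
    unfolding shifts_def by (rule finite_subset[of _ "{0..<int p}"]) auto
  have sub_Zp: "shifts p F c k \<subseteq> {0..<int p}" for k unfolding shifts_def by auto
  show ?thesis
  proof (induction k)
    case 0
    have "inj_on (\<lambda>s. (s + c) mod int p) F"
    proof (rule inj_onI)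
      fix x y assume xy: "x \<in> F" "y \<in> F" and eq: "(x + c) mod int p = (y + c) mod int p"
      have "x \<in> {0..<int p}" "y \<in> {0..<int p}" using F xy by auto
      then show "x = y" using mod_shift_inj[OF _ _ _ _ eq] by simp
    qed
    moreover have "(\<lambda>s. (s + c) mod int p) ` F \<subseteq> shifts p F c 0"
      using p unfolding shifts_def by auto
    ultimately have "card F \<le> card (shifts p F c 0)"
      using fin by (rule card_inj_on_le)
    then show ?case by simp
  next
    case (Suc k)
    have mono: "shifts p F c k \<subseteq> shifts p F c (Suc k)" unfolding shifts_def by fastforce
    have succ: "(x + 1) mod int p \<in> shifts p F c (Suc k)" if "x \<in> shifts p F c k" for x
    proof -
      from that obtain s j where s: "s \<in> F" "j \<le> k" "x = (s + c + int j) mod int p"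
        unfolding shifts_def by auto
      have "(x + 1) mod int p = (s + c + int (Suc j)) mod int p"
        using s(3) mod_add_left_eq[of "s + c + int j" "int p" 1] by (simp add: ac_simps)
      then show ?thesis unfolding shifts_def using s p by fastforce
    qed
    show ?case
    proof (cases "shifts p F c k = {0..<int p}")
      case True
      then have "shifts p F c (Suc k) = {0..<int p}" using mono sub_Zp by blast
      then show ?thesis by simp
    next
      case False
      obtain s where s: "s \<in> F" using F by blast
      then have "\<exists>s'\<in>F. \<exists>j\<in>{0..k}. (s + c) mod int p = (s' + c + int j) mod int p" by force
      then have "(s + c) mod int p \<in> shifts p F c k" unfolding shifts_def using p by simp
      from successor_escapes[OF sub_Zp this False]
      obtain x where x: "x \<in> shifts p F c k" "(x + 1) mod int p \<notin> shifts p F c k" by blast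
      have "card (insert ((x + 1) mod int p) (shifts p F c k)) \<le> card (shifts p F c (Suc k))"
        using mono succ x by (intro card_mono fin) blast
      then have "card (shifts p F c k) + 1 \<le> card (shifts p F c (Suc k))"
        using x fin by simp
      with Suc show ?thesis by linarith
    qed
  qed
qed

text \<open>They contain the shifts of \<open>F\<close>
  by \<open>q, ..., p-q\<close>, of which there are at least \<open>min p (|F| + p - 2q)\<close>; Katona's
  bound \<open>|F| \<le> q\<close> turns this into the claim.\<close>

lemma cyclic_expansion:
  fixes F :: "int set"
  assumes F: "F \<subseteq> {0..<int p}" and q: "1 \<le> q" "2*q \<le> p"
    and intersecting: "\<forall>s\<in>F. \<forall>t\<in>F. \<not> cyc_disjoint p q s t"
  shows "(p - q) * card F \<le> q * card {t\<in>{0..<int p}. \<exists>s\<in>F. cyc_disjoint p q s t}"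
proof (cases "F = {}")
  case False
  let ?D = "{t\<in>{0..<int p}. \<exists>s\<in>F. cyc_disjoint p q s t}"
  have katona: "card F \<le> q" using katona_cyclic[OF F q intersecting] .
  have "shifts p F (int q) (p - 2*q) \<subseteq> ?D"
  proof
    fix t assume "t \<in> shifts p F (int q) (p - 2*q)"
    then obtain s j where t: "t \<in> {0..<int p}" "s \<in> F" "j \<le> p - 2*q"
      "t = (s + int q + int j) mod int p" unfolding shifts_def by auto
    have "(t - s) mod int p = (int q + int j) mod int p"
      using t(4) by (simp add: mod_diff_left_eq)
    also have "\<dots> = int q + int j" using t(3) q by (intro mod_pos_pos_trivial) auto
    finally have "cyc_disjoint p q s t" unfolding cyc_disjoint_def using t(3) q by auto
    then show "t \<in> ?D" using t by auto
  qed
  moreover have "finite ?D" by (rule finite_subset[of _ "{0..<int p}"]) auto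
  ultimately have "card (shifts p F (int q) (p - 2*q)) \<le> card ?D" by (intro card_mono)
  with shifts_card[OF F False, of "p - 2*q" "int q"]
  have D: "min p (card F + (p - 2*q)) \<le> card ?D" by linarith
  show ?thesis
  proof (cases "p \<le> card F + (p - 2*q)")
    case True
    have "(p - q) * card F \<le> p * q" using katona by (metis diff_le_self mult_le_mono)
    also have "\<dots> \<le> q * card ?D" using True D by (simp add: mult.commute)
    finally show ?thesis .
  next
    case False
    obtain r where r: "p = 2*q + r" using q(2) le_Suc_ex by blast
    have "r * card F \<le> r * q" using katona by simp
    then have "(p - q) * card F \<le> q * (card F + (p - 2*q))"
      unfolding r by (simp add: algebra_simps)
    also have "\<dots> \<le> q * card ?D" using False D by simp
    finally show ?thesis .
  qed
qed simp


section \<open>Arcs as vertices of the Kneser graph\<close>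

text \<open>The arc starting at residue \<open>r\<close>: the elements \<open>r+1, ..., r+q\<close> of \<open>{1..p}\<close>,
  read modulo \<open>p\<close>.\<close>

definition arc :: "nat \<Rightarrow> nat \<Rightarrow> int \<Rightarrow> nat set" where
  "arc p q r = {x\<in>{1..p}. (int x - 1 - r) mod int p < int q}"

lemma arc_subset: "arc p q r \<subseteq> {1..p}"
  unfolding arc_def by auto

lemma arc_card:
  assumes "0 < p" "q \<le> p"
  shows "card (arc p q r) = q"
proof -
  define offset where "offset x = nat ((int x - 1 - r) mod int p)" for x
  have inj: "inj_on offset {1..p}"
  proof (rule inj_onI)
    fix x y assume x: "x \<in> {1..p}" and y: "y \<in> {1..p}" and e: "offset x = offset y"
    then have "((int x - 1) + - r) mod int p = ((int y - 1) + - r) mod int p"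
      using assms unfolding offset_def by (simp add: eq_nat_nat_iff)
    then show "x = y" using x y mod_shift_inj[of "int x - 1" "int p" "int y - 1" "- r"] by force
  qed
  have onto: "offset ` {1..p} = {..<p}"
  proof (rule card_subset_eq)
    show "offset ` {1..p} \<subseteq> {..<p}" unfolding offset_def using assms by (auto simp: nat_less_iff)
    show "card (offset ` {1..p}) = card {..<p}" using inj by (simp add: card_image)
  qed simp
  have "offset ` arc p q r = {..<q}"
  proof
    show "offset ` arc p q r \<subseteq> {..<q}" unfolding arc_def offset_def using assms by (auto simp: nat_less_iff)
    show "{..<q} \<subseteq> offset ` arc p q r"
    proof
      fix j assume j: "j \<in> {..<q}"
      then have "j \<in> offset ` {1..p}" using onto assms by auto
      then obtain x where x: "x \<in> {1..p}" "j = offset x" by blast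
      then have "x \<in> arc p q r" using j unfolding arc_def offset_def by auto
      then show "j \<in> offset ` arc p q r" using x by blast
    qed
  qed
  moreover have "inj_on offset (arc p q r)" using inj arc_subset by (rule inj_on_subset)
  ultimately show ?thesis by (metis card_image card_lessThan)
qed

lemma arc_vertex:
  assumes "0 < p" "q \<le> p"
  shows "arc p q r \<in> kneser_vertices p q"
  using arc_subset arc_card[OF assms] unfolding kneser_vertices_def by auto

lemma arc_start_offset:
  assumes "r \<in> {0..<int p}"
  shows "nat r + 1 \<in> {1..p}" "(int (nat r + 1) - 1 - s) mod int p = (r - s) mod int p"
  using assms by auto

lemma arc_disjoint_iff:
  assumes q: "0 < q" "q \<le> p" and st: "s \<in> {0..<int p}" "t \<in> {0..<int p}"
  shows "arc p q s \<inter> arc p q t = {} \<longleftrightarrow> cyc_disjoint p q s t"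
proof
  assume dj: "cyc_disjoint p q s t"
  show "arc p q s \<inter> arc p q t = {}"
  proof (rule ccontr)
    assume "arc p q s \<inter> arc p q t \<noteq> {}"
    then obtain x where x: "x \<in> arc p q s" "x \<in> arc p q t" by blast
    define a where "a = (int x - 1 - s) mod int p"
    define b where "b = (int x - 1 - t) mod int p"
    have ab: "0 \<le> a" "a < int q" "0 \<le> b" "b < int q"
      using x q unfolding a_def b_def arc_def by auto
    have "(t - s) mod int p = (a - b) mod int p" unfolding a_def b_def
      by (simp add: mod_diff_eq)
    moreover have "(a - b) mod int p = (if b \<le> a then a - b else a - b + int p)"
    proof (cases "b \<le> a")
      case False
      have "(a - b) mod int p = (a - b + int p) mod int p" by simp
      also have "\<dots> = a - b + int p" by (rule mod_pos_pos_trivial) (use ab q False in auto)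
      finally show ?thesis using False by simp
    qed (use ab q in \<open>simp add: mod_pos_pos_trivial\<close>)
    ultimately show False using dj ab unfolding cyc_disjoint_def by (auto split: if_splits)
  qed
next
  assume disjoint: "arc p q s \<inter> arc p q t = {}"
  have own: "nat r + 1 \<in> arc p q r" if "r \<in> {0..<int p}" for r
    using arc_start_offset[OF that] q unfolding arc_def by simp
  have d: "0 \<le> (t - s) mod int p" "(t - s) mod int p < int p" using q by auto
  have "(s - t) mod int p = (- (t - s)) mod int p" by simp
  also have "\<dots> = (if (t - s) mod int p = 0 then 0 else int p - (t - s) mod int p)"
    by (subst zmod_zminus1_eq_if) auto
  finally have s_t: "(s - t) mod int p = (if (t - s) mod int p = 0 then 0 else int p - (t - s) mod int p)" .
  show "cyc_disjoint p q s t"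
  proof (rule ccontr)
    assume "\<not> cyc_disjoint p q s t"
    then consider "(t - s) mod int p < int q" | "(s - t) mod int p < int q"
      using s_t q d unfolding cyc_disjoint_def by (auto split: if_splits)
    then show False
    proof cases
      case 1
      then have "nat t + 1 \<in> arc p q s" using arc_start_offset[OF st(2)] unfolding arc_def by simp
      with own[OF st(2)] disjoint show False by blast
    next
      case 2
      then have "nat s + 1 \<in> arc p q t" using arc_start_offset[OF st(1)] unfolding arc_def by simp
      with own[OF st(1)] disjoint show False by blast
    qed
  qed
qed


section \<open>Double counting over permutations\<close>

lemma permutes_onto:
  assumes "finite S" "A \<subseteq> S" "B \<subseteq> S" "card A = card B"
  shows "\<exists>\<tau>. \<tau> permutes S \<and> \<tau> ` A = B"
proof -
  obtain f where f: "bij_betw f A B"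
    using finite_same_card_bij assms finite_subset by metis
  have "card (S - A) = card (S - B)" using assms by (simp add: card_Diff_subset finite_subset)
  then obtain g where g: "bij_betw g (S - A) (S - B)"
    using finite_same_card_bij assms by (metis finite_Diff)
  define \<tau> where "\<tau> x = (if x \<in> A then f x else if x \<in> S then g x else x)" for x
  have on_A: "bij_betw \<tau> A B" using f by (rule bij_betw_cong[THEN iffD1, rotated]) (simp add: \<tau>_def)
  have "bij_betw \<tau> (S - A) (S - B)" using g by (rule bij_betw_cong[THEN iffD1, rotated]) (simp add: \<tau>_def)
  with on_A have "bij_betw \<tau> (A \<union> (S - A)) (B \<union> (S - B))" by (rule bij_betw_combine) blast
  moreover have "A \<union> (S - A) = S" "B \<union> (S - B) = S" using assms by auto
  ultimately have "\<tau> permutes S" by (intro bij_imp_permutes) (auto simp: \<tau>_def)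
  moreover have "\<tau> ` A = B" using on_A by (simp add: bij_betw_def)
  ultimately show ?thesis by blast
qed

definition placements :: "nat \<Rightarrow> nat \<Rightarrow> nat set \<Rightarrow> ((nat \<Rightarrow> nat) \<times> int) set" where
  "placements p q X = {(\<sigma>, r). \<sigma> permutes {1..p} \<and> r \<in> {0..<int p} \<and> \<sigma> ` X = arc p q r}"

lemma placements_finite: "finite (placements p q X)"
proof (rule finite_subset)
  show "placements p q X \<subseteq> {\<sigma>. \<sigma> permutes {1..p}} \<times> {0..<int p}" unfolding placements_def by auto
  show "finite ({\<sigma>. \<sigma> permutes {1..p}} \<times> {0..<int p})" using finite_permutations[of "{1..p}"] by simp
qed

text \<open>All vertices have equally many placements: if \<open>\<tau>\<close> maps \<open>B\<close> onto \<open>A\<close>, then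
  precomposition with \<open>\<tau>\<close> is a bijection between their placements.\<close>

lemma placements_card_eq:
  assumes A: "A \<in> kneser_vertices p q" and B: "B \<in> kneser_vertices p q"
  shows "card (placements p q A) = card (placements p q B)"
proof -
  obtain \<tau> where \<tau>: "\<tau> permutes {1..p}" "\<tau> ` B = A"
    using permutes_onto[of "{1..p}" B A] A B unfolding kneser_vertices_def by auto
  have \<tau>_inv: "inv \<tau> permutes {1..p}" "inv \<tau> ` A = B"
    using \<tau> by (auto intro: permutes_inv simp: image_inv_f_f permutes_inj)
  have transfer: "(\<sigma> \<circ> \<rho>, r) \<in> placements p q Y"
    if "(\<sigma>, r) \<in> placements p q X" "\<rho> permutes {1..p}" "\<rho> ` Y = X" for \<sigma> r \<rho> X Y
    using that permutes_compose[OF that(2)] unfolding placements_def by (auto simp: image_comp)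
  have "bij_betw (\<lambda>(\<sigma>, r). (\<sigma> \<circ> \<tau>, r)) (placements p q A) (placements p q B)"
  proof (rule bij_betw_byWitness[where f'="\<lambda>(\<sigma>, r). (\<sigma> \<circ> inv \<tau>, r)"])
    show "\<forall>a\<in>placements p q A. (\<lambda>(\<sigma>, r). (\<sigma> \<circ> inv \<tau>, r)) ((\<lambda>(\<sigma>, r). (\<sigma> \<circ> \<tau>, r)) a) = a"
      using permutes_inv_o(1)[OF \<tau>(1)] by (auto simp: comp_assoc)
    show "\<forall>a\<in>placements p q B. (\<lambda>(\<sigma>, r). (\<sigma> \<circ> \<tau>, r)) ((\<lambda>(\<sigma>, r). (\<sigma> \<circ> inv \<tau>, r)) a) = a"
      using permutes_inv_o(2)[OF \<tau>(1)] by (auto simp: comp_assoc)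
    show "(\<lambda>(\<sigma>, r). (\<sigma> \<circ> \<tau>, r)) ` placements p q A \<subseteq> placements p q B"
      using transfer \<tau> by auto
    show "(\<lambda>(\<sigma>, r). (\<sigma> \<circ> inv \<tau>, r)) ` placements p q B \<subseteq> placements p q A"
      using transfer \<tau>_inv by auto
  qed
  then show ?thesis by (rule bij_betw_same_card)
qed

lemma placements_card_pos:
  assumes "0 < p"
  shows "0 < card (placements p q (arc p q 0))"
proof -
  have "(id, 0) \<in> placements p q (arc p q 0)" using assms unfolding placements_def by auto
  then show ?thesis using placements_finite by (metis card_gt_0_iff empty_iff)
qed

definition arc_starts :: "nat \<Rightarrow> nat \<Rightarrow> (nat \<Rightarrow> nat) \<Rightarrow> nat set set \<Rightarrow> int set" where
  "arc_starts p q \<sigma> J = {r\<in>{0..<int p}. \<exists>A\<in>J. \<sigma> ` A = arc p q r}"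

lemma arc_starts_finite: "finite (arc_starts p q \<sigma> J)"
  unfolding arc_starts_def by (rule finite_subset[of _ "{0..<int p}"]) auto

text \<open>Double counting: summed over all permutations, the arc starts of a family of
  vertices count each vertex by its number of placements, which is the same for all.\<close>

lemma sum_arc_starts:
  assumes J: "J \<subseteq> kneser_vertices p q" and p: "0 < p" "q \<le> p"
  shows "(\<Sum>\<sigma>\<in>{\<sigma>. \<sigma> permutes {1..p}}. card (arc_starts p q \<sigma> J))
          = card J * card (placements p q (arc p q 0))"
proof -
  let ?P = "{\<sigma>. \<sigma> permutes {1..p}}"
  have finJ: "finite J"
    by (rule finite_subset[OF J], rule finite_subset[of _ "Pow {1..p}"]) (auto simp: kneser_vertices_def)
  have "(\<Sum>\<sigma>\<in>?P. card (arc_starts p q \<sigma> J)) = card (SIGMA \<sigma>:?P. arc_starts p q \<sigma> J)"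
    using finite_permutations[of "{1..p}"] arc_starts_finite by (intro card_SigmaI[symmetric]) auto
  also have "(SIGMA \<sigma>:?P. arc_starts p q \<sigma> J) = (\<Union>A\<in>J. placements p q A)"
    unfolding placements_def arc_starts_def by auto
  also have "card (\<Union>A\<in>J. placements p q A) = (\<Sum>A\<in>J. card (placements p q A))"
  proof (rule card_UN_disjoint[OF finJ])
    show "\<forall>A\<in>J. finite (placements p q A)" using placements_finite by blast
    show "\<forall>A\<in>J. \<forall>B\<in>J. A \<noteq> B \<longrightarrow> placements p q A \<inter> placements p q B = {}"
      unfolding placements_def disjoint_iff by (clarsimp, metis inj_image_eq_iff permutes_inj)
  qed
  also have "\<dots> = (\<Sum>A\<in>J. card (placements p q (arc p q 0)))"
    by (rule sum.cong[OF refl], rule placements_card_eq) (use J arc_vertex[OF p] in auto)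
  finally show ?thesis by simp
qed


section \<open>Expansion of independent sets\<close>

text \<open>For a fixed permutation \<open>\<sigma>\<close>, the arcs hit by \<open>\<sigma> ` I\<close> form an intersecting
  family (as \<open>I\<close> is independent), and every arc disjoint from one of them is the
  image of a neighbour of \<open>I\<close>; so the cyclic expansion bound applies.\<close>

lemma arc_starts_expansion:
  assumes q: "1 \<le> q" "2*q \<le> p" and I: "kneser_independent p q I"
    and \<sigma>: "\<sigma> permutes {1..p}"
  shows "(p - q) * card (arc_starts p q \<sigma> I) \<le> q * card (arc_starts p q \<sigma> (kneser_nbhd p q I))"
proof -
  let ?F = "arc_starts p q \<sigma> I"
  let ?D = "{t\<in>{0..<int p}. \<exists>s\<in>?F. cyc_disjoint p q s t}"
  have IV: "I \<subseteq> kneser_vertices p q" using I unfolding kneser_independent_def by simp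
  have inj: "inj \<sigma>" using \<sigma> by (rule permutes_inj)
  have arcs_disj: "arc p q s \<inter> arc p q t = {} \<longleftrightarrow> cyc_disjoint p q s t"
    if "s \<in> ?F" "t \<in> {0..<int p}" for s t
    using arc_disjoint_iff[of q p s t] that q unfolding arc_starts_def by auto
  have "\<forall>s\<in>?F. \<forall>t\<in>?F. \<not> cyc_disjoint p q s t"
  proof (intro ballI notI)
    fix s t assume s: "s \<in> ?F" and t: "t \<in> ?F" and d: "cyc_disjoint p q s t"
    obtain A A' where A: "A \<in> I" "\<sigma> ` A = arc p q s" and A': "A' \<in> I" "\<sigma> ` A' = arc p q t"
      using s t unfolding arc_starts_def by auto
    have "\<sigma> ` (A \<inter> A') = {}" using arcs_disj s t d A A' inj
      unfolding arc_starts_def by (simp add: image_Int)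
    then have "kneser_adj p q A A'" using A A' IV unfolding kneser_adj_def by auto
    then show False using I A A' unfolding kneser_independent_def by blast
  qed
  then have "(p - q) * card ?F \<le> q * card ?D"
    by (intro cyclic_expansion q) (auto simp: arc_starts_def)
  also have "card ?D \<le> card (arc_starts p q \<sigma> (kneser_nbhd p q I))"
  proof (rule card_mono)
    show "finite (arc_starts p q \<sigma> (kneser_nbhd p q I))" by (rule arc_starts_finite)
    show "?D \<subseteq> arc_starts p q \<sigma> (kneser_nbhd p q I)"
    proof
      fix t assume "t \<in> ?D"
      then obtain s where t: "t \<in> {0..<int p}" and s: "s \<in> ?F" and d: "cyc_disjoint p q s t" by blast
      obtain A where A: "A \<in> I" "\<sigma> ` A = arc p q s" using s unfolding arc_starts_def by auto
      define B where "B = inv \<sigma> ` arc p q t"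
      have \<sigma>_inv: "inv \<sigma> permutes {1..p}" using \<sigma> by (rule permutes_inv)
      have \<sigma>B: "\<sigma> ` B = arc p q t" unfolding B_def
        by (simp add: image_comp permutes_inv_o(1)[OF \<sigma>])
      have "B \<subseteq> {1..p}" unfolding B_def using arc_subset permutes_in_image[OF \<sigma>_inv] by blast
      moreover have "card B = q" unfolding B_def
        using card_image[OF inj_on_subset[OF permutes_inj[OF \<sigma>_inv]]] arc_card[of p q t] q by simp
      ultimately have "B \<in> kneser_vertices p q" unfolding kneser_vertices_def by simp
      moreover have "\<sigma> ` (A \<inter> B) = {}" using arcs_disj[OF s t] d A \<sigma>B inj by (simp add: image_Int)
      ultimately have "kneser_adj p q A B" using A IV unfolding kneser_adj_def by auto
      then have "B \<in> kneser_nbhd p q I" using A unfolding kneser_nbhd_def by auto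
      then show "t \<in> arc_starts p q \<sigma> (kneser_nbhd p q I)" using t \<sigma>B unfolding arc_starts_def by auto
    qed
  qed
  finally show ?thesis by simp
qed

lemma kneser_independent_expansion:
  assumes q: "1 \<le> q" "2*q \<le> p" and I: "kneser_independent p q I"
  shows "(p - q) * card I \<le> q * card (kneser_nbhd p q I)"
proof -
  have p: "0 < p" "q \<le> p" using q by auto
  let ?P = "{\<sigma>. \<sigma> permutes {1..p}}"
  let ?N = "kneser_nbhd p q I"
  let ?c = "card (placements p q (arc p q 0))"
  have IV: "I \<subseteq> kneser_vertices p q" using I unfolding kneser_independent_def by simp
  have NV: "?N \<subseteq> kneser_vertices p q" unfolding kneser_nbhd_def kneser_adj_def by auto
  have "(p - q) * card I * ?c = (p - q) * (\<Sum>\<sigma>\<in>?P. card (arc_starts p q \<sigma> I))"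
    using sum_arc_starts[OF IV p] by simp
  also have "\<dots> = (\<Sum>\<sigma>\<in>?P. (p - q) * card (arc_starts p q \<sigma> I))"
    by (rule sum_distrib_left)
  also have "\<dots> \<le> (\<Sum>\<sigma>\<in>?P. q * card (arc_starts p q \<sigma> ?N))"
    by (rule sum_mono) (use arc_starts_expansion[OF q I] in auto)
  also have "\<dots> = q * (\<Sum>\<sigma>\<in>?P. card (arc_starts p q \<sigma> ?N))"
    by (rule sum_distrib_left[symmetric])
  also have "\<dots> = q * card ?N * ?c"
    using sum_arc_starts[OF NV p] by simp
  finally show ?thesis using placements_card_pos[OF p(1)] by simp
qed

theorem mainTheorem7:
  fixes p q :: nat and I :: "nat set set"
  assumes "q \<ge> 1" and "real p / real q \<ge> 2"
    and "kneser_independent p q I"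
  shows "real (card (kneser_nbhd p q I)) \<ge> (real p - real q) / real q * real (card I)"
proof -
  have q_pos: "real q > 0" using assms(1) by simp
  then have "2 * q \<le> p" using assms(2) by (simp add: le_divide_eq flip: of_nat_le_iff)
  then have "real ((p - q) * card I) \<le> real (q * card (kneser_nbhd p q I))"
    using kneser_independent_expansion[OF assms(1) _ assms(3)] by (simp only: of_nat_le_iff)
  then have "(real p - real q) * real (card I) \<le> real q * real (card (kneser_nbhd p q I))"
    using \<open>2 * q \<le> p\<close> by (simp add: of_nat_diff)
  then show ?thesis using q_pos by (simp add: divide_le_eq mult.commute mult.left_commute)
qed

end
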